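(* Let $(\mathbf{x}_t,\mathbf{z}_t,\mathbf{y}_t)_{t\ge 0}$ be generated by generalized Bregman ADMM (defined in the context) with parameters $\rho>0$, $\tau>0$, $\rho_{\mathbf{x}}\ge 0$, $\rho_{\mathbf{z}}\ge 0$, under the standing assumptions. Then for every $t\ge 0$ and every $\mathbf{x}^*,\mathbf{z}^*$ with $\mathbf{A}\mathbf{x}^*+\mathbf{B}\mathbf{z}^*=\mathbf{c}$ (and with all Bregman divergences below well defined), \begin{align*} &f(\mathbf{x}_{t+1})+g(\mathbf{z}_{t+1})-\big(f(\mathbf{x}^* )+g(\mathbf{z}^* )\big)\\ &\le -\langle \mathbf{y}_t,\mathbf{A}\mathbf{x}_{t+1}+\mathbf{B}\mathbf{z}_{t+1}-\mathbf{c}\rangle-\rho\big(B_\phi(\mathbf{c}-\mathbf{A}\mathbf{x}_{t+1},\mathbf{B}\mathbf{z}_t)+B_\phi(\mathbf{B}\mathbf{z}_{t+1},\mathbf{c}-\mathbf{A}\mathbf{x}_{t+1})\big)\\ &\quad+\rho\big(B_\phi(\mathbf{B}\mathbf{z}^*,\mathbf{B}\mathbf{z}_t)-B_\phi(\mathbf{B}\mathbf{z}^*,\mathbf{B}\mathbf{z}_{t+1})\big)\\ &\quad+\rho_{\mathbf{x}}\big(B_{\varphi_{\mathbf{x}}}(\mathbf{x}^*,\mathbf{x}_t)-B_{\varphi_{\mathbf{x}}}(\mathbf{x}^*,\mathbf{x}_{t+1})-B_{\varphi_{\mathbf{x}}}(\mathbf{x}_{t+1},\mathbf{x}_t)\big)\\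 &\quad+\rho_{\mathbf{z}}\big(B_{\varphi_{\mathbf{z}}}(\mathbf{z}^*,\mathbf{z}_t)-B_{\varphi_{\mathbf{z}}}(\mathbf{z}^*,\mathbf{z}_{t+1})-B_{\varphi_{\mathbf{z}}}(\mathbf{z}_{t+1},\mathbf{z}_t)\big). \end{align*}
   Context: Problem: $f:\mathbb{R}^{n_1}\to\mathbb{R}\cup\{+\infty\}$ and $g:\mathbb{R}^{n_2}\to\mathbb{R}\cup\{+\infty\}$ are closed, proper, convex; $\mathbf{A}\in\mathbb{R}^{m\times n_1}$, $\mathbf{B}\in\mathbb{R}^{m\times n_2}$, $\mathbf{c}\in\mathbb{R}^m$; $\mathcal{X}\subseteq\mathbb{R}^{n_1}$, $\mathcal{Z}\subseteq\mathbb{R}^{n_2}$ convex; the problem is $\min f(\mathbf{x})+g(\mathbf{z})$ s.t. $\mathbf{x}\in\mathcal{X},\mathbf{z}\in\mathcal{Z},\mathbf{A}\mathbf{x}+\mathbf{B}\mathbf{z}=\mathbf{c}$. For a continuously differentiable, strictly convex function $\psi$ on (the relative interior of) a convex set, the Bregman divergence is $B_\psi(\mathbf{u},\mathbf{v})=\psi(\mathbf{u})-\psi(\mathbf{v})-\langle\nabla\psi(\mathbf{v}),\mathbf{u}-\mathbf{v}\rangle\ge 0$. Three such functions are fixed: $\phi$ (on a convex subset of $\mathbb{R}^m$), $\varphi_{\mathbf{x}}$ (on $\mathbb{R}^{n_1}$ or a convex subset), $\varphi_{\mathbf{z}}$ (on $\mathbb{R}^{n_2}$ or a convex subset). Generalized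 Bregman ADMM: given $(\mathbf{x}_0,\mathbf{z}_0,\mathbf{y}_0)$ and parameters $\rho>0,\tau>0,\rho_{\mathbf{x}}\ge0,\rho_{\mathbf{z}}\ge0$, for $t\ge0$: $\mathbf{x}_{t+1}=\arg\min_{\mathbf{x}\in\mathcal{X}} f(\mathbf{x})+\langle\mathbf{y}_t,\mathbf{A}\mathbf{x}+\mathbf{B}\mathbf{z}_t-\mathbf{c}\rangle+\rho B_\phi(\mathbf{c}-\mathbf{A}\mathbf{x},\mathbf{B}\mathbf{z}_t)+\rho_{\mathbf{x}}B_{\varphi_{\mathbf{x}}}(\mathbf{x},\mathbf{x}_t)$; $\mathbf{z}_{t+1}=\arg\min_{\mathbf{z}\in\mathcal{Z}} g(\mathbf{z})+\langle\mathbf{y}_t,\mathbf{A}\mathbf{x}_{t+1}+\mathbf{B}\mathbf{z}-\mathbf{c}\rangle+\rho B_\phi(\mathbf{B}\mathbf{z},\mathbf{c}-\mathbf{A}\mathbf{x}_{t+1})+\rho_{\mathbf{z}}B_{\varphi_{\mathbf{z}}}(\mathbf{z},\mathbf{z}_t)$; $\mathbf{y}_{t+1}=\mathbf{y}_t+\tau(\mathbf{A}\mathbf{x}_{t+1}+\mathbf{B}\mathbf{z}_{t+1}-\mathbf{c})$. Standing assumptions: the minimizers exist; all Bregman divergences are evaluated at points where they are defined (second arguments where the generating function is differentiable); and the minimizers satisfy the first-order optimality conditions $-\mathbf{A}^T\{\mathbf{y}_t+\rho(\nabla\phi(\mathbf{B}\mathbf{z}_t)-\nabla\phi(\mathbf{c}-\mathbf{A}\mathbf{x}_{t+1}))\}-\rho_{\mathbf{x}}(\nabla\varphi_{\mathbf{x}}(\mathbf{x}_{t+1})-\nabla\varphi_{\mathbf{x}}(\mathbf{x}_t))\in\partial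 f(\mathbf{x}_{t+1})$ and $-\mathbf{B}^T\{\mathbf{y}_t+\rho(\nabla\phi(\mathbf{B}\mathbf{z}_{t+1})-\nabla\phi(\mathbf{c}-\mathbf{A}\mathbf{x}_{t+1}))\}-\rho_{\mathbf{z}}(\nabla\varphi_{\mathbf{z}}(\mathbf{z}_{t+1})-\nabla\varphi_{\mathbf{z}}(\mathbf{z}_t))\in\partial g(\mathbf{z}_{t+1})$ (e.g. the set constraints are absorbed into $f,g$ as indicator functions). *)

theory Defs
  imports "HOL-Analysis.Analysis"
begin

definition epigraph :: "('a \<Rightarrow> ereal) \<Rightarrow> ('a \<times> real) set" where
  "epigraph f = {(x, r). f x \<le> ereal r}"

definition proper_fun :: "('a \<Rightarrow> ereal) \<Rightarrow> bool" where
  "proper_fun f \<longleftrightarrow> (\<forall>x. f x \<noteq> -\<infinity>) \<and> (\<exists>x. f x \<noteq> \<infinity>)"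

definition convex_fun :: "('a::real_vector \<Rightarrow> ereal) \<Rightarrow> bool" where
  "convex_fun f \<longleftrightarrow> convex (epigraph f)"

definition closed_fun :: "('a::topological_space \<Rightarrow> ereal) \<Rightarrow> bool" where
  "closed_fun f \<longleftrightarrow> closed (epigraph f)"

definition subdiff :: "('a::real_inner \<Rightarrow> ereal) \<Rightarrow> 'a \<Rightarrow> 'a set" where
  "subdiff f x = {s. \<forall>u. f x + ereal (s \<bullet> (u - x)) \<le> f u}"

definition strictly_convex_on :: "'a::real_vector set \<Rightarrow> ('a \<Rightarrow> real) \<Rightarrow> bool" where
  "strictly_convex_on D psi \<longleftrightarrow>
     (\<forall>x\<in>D. \<forall>y\<in>D. x \<noteq> y \<longrightarrow> (\<forall>t::real. 0 < t \<and> t < 1 \<longrightarrow>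
        psi ((1 - t) *\<^sub>R x + t *\<^sub>R y) < (1 - t) * psi x + t * psi y))"

definition bregman_generator ::
  "'a::euclidean_space set \<Rightarrow> ('a \<Rightarrow> real) \<Rightarrow> ('a \<Rightarrow> 'a) \<Rightarrow> bool" where
  "bregman_generator D psi dpsi \<longleftrightarrow> convex D \<and> strictly_convex_on D psi \<and>
     (\<forall>v\<in>D. (psi has_derivative (\<lambda>h. dpsi v \<bullet> h)) (at v within D)) \<and>
     continuous_on D dpsi"

definition bregman :: "('a::real_inner \<Rightarrow> real) \<Rightarrow> ('a \<Rightarrow> 'a) \<Rightarrow> 'a \<Rightarrow> 'a \<Rightarrow> real" where
  "bregman psi dpsi u v = psi u - psi v - dpsi v \<bullet> (u - v)"

end

theory Submission
  imports Defs
begin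

text \<open>Evaluate the subgradient inequalities of the two ADMM updates at the feasible point
  (xs, zs). Since A xs + B zs = c, every pairing of a gradient difference with
  a difference of iterates is an instance of the three-point identity of Bregman divergences,
  and the dual pairings collapse to the residual term; adding the two inequalities gives the bound. Beyond
  properness of f and g, only the first-order conditions of the updates and feasibility are used.\<close>

lemma transpose_mult_vector_inner:
  "(transpose (A :: real^'n^'m) *v v) \<bullet> w = v \<bullet> (A *v w)"
  by (simp add: dot_lmul_matrix flip: vector_transpose_matrix)

lemma bregman_three_point:
  "(dpsi b - dpsi a) \<bullet> (u - b) = bregman psi dpsi u a - bregman psi dpsi u b - bregman psi dpsi b a"
  unfolding bregman_def by (simp add: inner_diff_left inner_diff_right algebra_simps)

lemma subdiff_proper_finite:
  assumes "proper_fun f" and "s \<in> subdiff f x"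
  obtains r where "f x = ereal r"
proof -
  obtain u where "f u \<noteq> \<infinity>" using assms(1) unfolding proper_fun_def by blast
  moreover have "f x + ereal (s \<bullet> (u - x)) \<le> f u" using assms(2) unfolding subdiff_def by blast
  ultimately have "f x \<noteq> \<infinity>" by auto
  with assms(1) show thesis using that unfolding proper_fun_def by (cases "f x") auto
qed

lemma subdiff_sum_gap_le:
  assumes f: "proper_fun f" "s \<in> subdiff f x"
    and g: "proper_fun g" "r \<in> subdiff g z"
  shows "f x + g z - (f u + g w) \<le> ereal (s \<bullet> (x - u) + r \<bullet> (z - w))"
proof -
  obtain F where F: "f x = ereal F" using subdiff_proper_finite f .
  obtain G where G: "g z = ereal G" using subdiff_proper_finite g .
  have not_minf: "f u \<noteq> -\<infinity>" "g w \<noteq> -\<infinity>"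
    using f(1) g(1) unfolding proper_fun_def by auto
  show ?thesis
  proof (cases "f u = \<infinity> \<or> g w = \<infinity>")
    case True
    then have "f u + g w = \<infinity>" using not_minf by auto
    then show ?thesis by (simp only: F G plus_ereal.simps) simp
  next
    case False
    then obtain Fu Gw where Fu: "f u = ereal Fu" and Gw: "g w = ereal Gw"
      using not_minf by (cases "f u"; cases "g w") auto
    have "f x + ereal (s \<bullet> (u - x)) \<le> f u" "g z + ereal (r \<bullet> (w - z)) \<le> g w"
      using f(2) g(2) unfolding subdiff_def by blast+
    then have "F + s \<bullet> (u - x) \<le> Fu" "G + r \<bullet> (w - z) \<le> Gw"
      by (simp_all add: F G Fu Gw)
    moreover have "s \<bullet> (u - x) = - (s \<bullet> (x - u))" "r \<bullet> (w - z) = - (r \<bullet> (z - w))"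
      by (simp_all add: inner_diff_right)
    ultimately show ?thesis by (simp add: F G Fu Gw)
  qed
qed

lemma linearized_subgradient_inner:
  fixes A :: "real^'n^'m"
  shows "(- (transpose A *v (y + \<rho> *\<^sub>R d)) - \<rho>' *\<^sub>R e) \<bullet> (x1 - xs)
    = - (y \<bullet> (A *v x1 - A *v xs)) - \<rho> * (d \<bullet> (A *v x1 - A *v xs)) + \<rho>' * (e \<bullet> (xs - x1))"
proof -
  have "(transpose A *v (y + \<rho> *\<^sub>R d)) \<bullet> (x1 - xs) = y \<bullet> (A *v x1 - A *v xs) + \<rho> * (d \<bullet> (A *v x1 - A *v xs))"
    by (simp only: transpose_mult_vector_inner matrix_vector_mult_diff_distrib inner_add_left inner_scaleR_left)
  moreover have "e \<bullet> (x1 - xs) = - (e \<bullet> (xs - x1))"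
    by (metis inner_minus_right minus_diff_eq)
  ultimately show ?thesis
    by (simp only: inner_diff_left inner_minus_left inner_scaleR_left)
qed

lemma admm_linearized_gap_eq:
  fixes A :: "real^'n1^'m" and B :: "real^'n2^'m" and x1 :: "real^'n1"
  assumes feas: "A *v xs + B *v zs = c"
  shows "(- (transpose A *v (y + \<rho> *\<^sub>R (dphi (B *v z0) - dphi (c - A *v x1))))
            - \<rho>x *\<^sub>R (dphix x1 - dphix x0)) \<bullet> (x1 - xs)
       + (- (transpose B *v (y + \<rho> *\<^sub>R (dphi (B *v z1) - dphi (c - A *v x1))))
            - \<rho>z *\<^sub>R (dphiz z1 - dphiz z0)) \<bullet> (z1 - zs)
    = - (y \<bullet> (A *v x1 + B *v z1 - c))
        - \<rho> * (bregman phi dphi (c - A *v x1) (B *v z0) + bregman phi dphi (B *v z1) (c - A *v x1))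
        + \<rho> * (bregman phi dphi (B *v zs) (B *v z0) - bregman phi dphi (B *v zs) (B *v z1))
        + \<rho>x * (bregman phix dphix xs x0 - bregman phix dphix xs x1 - bregman phix dphix x1 x0)
        + \<rho>z * (bregman phiz dphiz zs z0 - bregman phiz dphiz zs z1 - bregman phiz dphiz z1 z0)"
proof -
  define a where "a = c - A *v x1"
  let ?D = "bregman phi dphi"
  have Ax: "A *v x1 - A *v xs = B *v zs - a"
    using feas unfolding a_def by (simp add: algebra_simps)
  have residual: "y \<bullet> (B *v zs - a) = y \<bullet> (A *v x1 + B *v z1 - c) - y \<bullet> (B *v z1 - B *v zs)"
    unfolding a_def by (simp add: inner_diff_right inner_add_right)
  have phi_pairing_x: "(dphi (B *v z0) - dphi a) \<bullet> (B *v zs - a)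
      = - (?D (B *v zs) (B *v z0) - ?D (B *v zs) a - ?D a (B *v z0))"
    using bregman_three_point[of dphi a "B *v z0" "B *v zs" phi]
    by (metis inner_minus_left minus_diff_eq)
  have phi_pairing_z: "(dphi (B *v z1) - dphi a) \<bullet> (B *v z1 - B *v zs)
      = - (?D (B *v zs) a - ?D (B *v zs) (B *v z1) - ?D (B *v z1) a)"
    using bregman_three_point[of dphi "B *v z1" a "B *v zs" phi]
    by (metis inner_minus_right minus_diff_eq)
  show ?thesis
    unfolding a_def[symmetric] linearized_subgradient_inner Ax residual phi_pairing_x phi_pairing_z
      bregman_three_point[of dphix x1 x0 xs phix] bregman_three_point[of dphiz z1 z0 zs phiz]
    by (simp only: ring_distribs mult_minus_right)
qed

theorem lemma1:
  fixes f :: "real^'n1 \<Rightarrow> ereal" and g :: "real^'n2 \<Rightarrow> ereal"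
    and A :: "real^'n1^'m" and B :: "real^'n2^'m" and c :: "real^'m"
    and X :: "(real^'n1) set" and Z :: "(real^'n2) set"
    and phi :: "real^'m \<Rightarrow> real" and dphi :: "real^'m \<Rightarrow> real^'m" and Dphi :: "(real^'m) set"
    and phix :: "real^'n1 \<Rightarrow> real" and dphix :: "real^'n1 \<Rightarrow> real^'n1" and Dx :: "(real^'n1) set"
    and phiz :: "real^'n2 \<Rightarrow> real" and dphiz :: "real^'n2 \<Rightarrow> real^'n2" and Dz :: "(real^'n2) set"
    and x :: "nat \<Rightarrow> real^'n1" and z :: "nat \<Rightarrow> real^'n2" and y :: "nat \<Rightarrow> real^'m"
    and \<rho> \<tau> \<rho>x \<rho>z :: real
    and t :: nat and xs :: "real^'n1" and zs :: "real^'n2"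
  assumes f: "proper_fun f" "convex_fun f" "closed_fun f"
    and g: "proper_fun g" "convex_fun g" "closed_fun g"
    and XZ: "convex X" "convex Z"
    and gen: "bregman_generator Dphi phi dphi" "bregman_generator Dx phix dphix"
             "bregman_generator Dz phiz dphiz"
    and params: "\<rho> > 0" "\<tau> > 0" "\<rho>x \<ge> 0" "\<rho>z \<ge> 0"
    and dom_iter: "\<And>k. x k \<in> Dx" "\<And>k. z k \<in> Dz" "\<And>k. B *v z k \<in> Dphi"
                  "\<And>k. c - A *v x (Suc k) \<in> Dphi"
    and x_step: "\<And>k. x (Suc k) \<in> X \<and>
        (\<forall>u\<in>X. c - A *v u \<in> Dphi \<and> u \<in> Dx \<longrightarrow>
           f (x (Suc k)) + ereal (y k \<bullet> (A *v x (Suc k) + B *v z k - c)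
              + \<rho> * bregman phi dphi (c - A *v x (Suc k)) (B *v z k)
              + \<rho>x * bregman phix dphix (x (Suc k)) (x k))
           \<le> f u + ereal (y k \<bullet> (A *v u + B *v z k - c)
              + \<rho> * bregman phi dphi (c - A *v u) (B *v z k)
              + \<rho>x * bregman phix dphix u (x k)))"
    and z_step: "\<And>k. z (Suc k) \<in> Z \<and>
        (\<forall>w\<in>Z. B *v w \<in> Dphi \<and> w \<in> Dz \<longrightarrow>
           g (z (Suc k)) + ereal (y k \<bullet> (A *v x (Suc k) + B *v z (Suc k) - c)
              + \<rho> * bregman phi dphi (B *v z (Suc k)) (c - A *v x (Suc k))
              + \<rho>z * bregman phiz dphiz (z (Suc k)) (z k))
           \<le> g w + ereal (y k \<bullet> (A *v x (Suc k) + B *v w - c)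
              + \<rho> * bregman phi dphi (B *v w) (c - A *v x (Suc k))
              + \<rho>z * bregman phiz dphiz w (z k)))"
    and y_step: "\<And>k. y (Suc k) = y k + \<tau> *\<^sub>R (A *v x (Suc k) + B *v z (Suc k) - c)"
    and opt_x: "\<And>k. - (transpose A *v (y k + \<rho> *\<^sub>R (dphi (B *v z k) - dphi (c - A *v x (Suc k)))))
                 - \<rho>x *\<^sub>R (dphix (x (Suc k)) - dphix (x k)) \<in> subdiff f (x (Suc k))"
    and opt_z: "\<And>k. - (transpose B *v (y k + \<rho> *\<^sub>R (dphi (B *v z (Suc k)) - dphi (c - A *v x (Suc k)))))
                 - \<rho>z *\<^sub>R (dphiz (z (Suc k)) - dphiz (z k)) \<in> subdiff g (z (Suc k))"
    and feas: "A *v xs + B *v zs = c"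
    and dom_star: "xs \<in> Dx" "zs \<in> Dz" "B *v zs \<in> Dphi"
  shows "f (x (Suc t)) + g (z (Suc t)) - (f xs + g zs)
    \<le> ereal (- (y t \<bullet> (A *v x (Suc t) + B *v z (Suc t) - c))
        - \<rho> * (bregman phi dphi (c - A *v x (Suc t)) (B *v z t)
               + bregman phi dphi (B *v z (Suc t)) (c - A *v x (Suc t)))
        + \<rho> * (bregman phi dphi (B *v zs) (B *v z t) - bregman phi dphi (B *v zs) (B *v z (Suc t)))
        + \<rho>x * (bregman phix dphix xs (x t) - bregman phix dphix xs (x (Suc t))
                - bregman phix dphix (x (Suc t)) (x t))
        + \<rho>z * (bregman phiz dphiz zs (z t) - bregman phiz dphiz zs (z (Suc t))
                - bregman phiz dphiz (z (Suc t)) (z t)))"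
  using subdiff_sum_gap_le[OF f(1) opt_x[of t] g(1) opt_z[of t], where u = xs and w = zs]
    admm_linearized_gap_eq[OF feas]
  by (rule ord_le_eq_trans[OF _ arg_cong[where f = ereal]])

end
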